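(* Let $d\ge1$, let $\mathbf{e}_0=\mathbf{0}\in\mathbb{R}^d$ and $\mathbf{e}_1,\ldots,\mathbf{e}_d$ the standard unit basis vectors, let $\lambda\in[\frac{d}{d+1},1)$ and consider $S_i(\mathbf{x})=\lambda\mathbf{x}+(1-\lambda)\mathbf{e}_i$, $i=0,\ldots,d$, with attractor $X$. If $\mathbf{x}\in\mathrm{int}(X)$, then there exists a finite word $\mathbf{a}\in\mathcal{D}^*$ such that $T_{\mathbf{a}}(\mathbf{x})\in(0,1-\lambda]^d$.
   Context: $\mathcal{D}=\{0,\ldots,d\}$, $\mathcal{D}^*$ is the set of finite words over $\mathcal{D}$ (including the empty word). $X$ is the unique non-empty compact set with $X=\bigcup_{i=0}^dS_i(X)$. For $i\in\mathcal{D}$, $T_i(\mathbf{x})=\frac{\mathbf{x}-(1-\lambda)\mathbf{e}_i}{\lambda}$ is the inverse of $S_i$, and for $\mathbf{a}=a_1\cdots a_j\in\mathcal{D}^*$, $T_{\mathbf{a}}=T_{a_j}\circ\cdots\circ T_{a_1}$ (the identity for the empty word). *)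

theory Defs
  imports "HOL-Analysis.Analysis"
begin

text \<open>Digit set D = {0,...,d} is encoded as the type 'n option:
  None stands for digit 0 (e_0 = 0), Some j stands for the coordinate j
  (e_j the standard unit vector). Here d = CARD('n).\<close>

definition ebasis :: "'n::finite option \<Rightarrow> real^'n" where
  "ebasis i = (case i of None \<Rightarrow> 0 | Some j \<Rightarrow> axis j 1)"

definition Smap :: "real \<Rightarrow> 'n::finite option \<Rightarrow> real^'n \<Rightarrow> real^'n" where
  "Smap lam i x = lam *\<^sub>R x + (1 - lam) *\<^sub>R ebasis i"

definition Tmap :: "real \<Rightarrow> 'n::finite option \<Rightarrow> real^'n \<Rightarrow> real^'n" where
  "Tmap lam i x = (1 / lam) *\<^sub>R (x - (1 - lam) *\<^sub>R ebasis i)"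

text \<open>T_a for a = a_1 ... a_j is T_{a_j} o ... o T_{a_1}; fold applies a_1 first.\<close>
definition Tword :: "real \<Rightarrow> 'n::finite option list \<Rightarrow> real^'n \<Rightarrow> real^'n" where
  "Tword lam a x = fold (Tmap lam) a x"

end

theory Submission
  imports Defs
begin

text \<open>The attractor lies in the simplex with vertices \<open>e\<^sub>0, \<dots>, e\<^sub>d\<close>: a linear functional
  attains its maximum over \<open>X\<close> at some \<open>S\<^sub>i z\<close>, a convex combination of \<open>z \<in> X\<close> and the
  vertex \<open>e\<^sub>i\<close>. So an interior point \<open>x\<close> has positive coordinates and coordinate sum
  \<open>s\<^sub>0 < 1\<close>. As long as some coordinate exceeds \<open>1 - \<lambda>\<close>, apply the corresponding \<open>T\<^sub>j\<close>:
  all coordinates stay positive and the coordinate sum \<open>s\<close> becomes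
  \<open>s - (1 - \<lambda>)(1 - s)/\<lambda>\<close>, so it drops by at least \<open>(1 - \<lambda>)(1 - s\<^sub>0)/\<lambda>\<close> in every step.
  Since it stays positive, this greedy process stops, inside \<open>(0, 1 - \<lambda>]\<^sup>d\<close>.\<close>

lemma attractor_subset_halfspace:
  fixes X :: "(real^'n::finite) set"
  assumes lam: "0 < lam" "lam < 1"
    and X: "X \<noteq> {}" "compact X" "X = (\<Union>i. Smap lam i ` X)"
    and vertices: "\<And>i. a \<bullet> ebasis i \<le> b"
  shows "X \<subseteq> {y. a \<bullet> y \<le> b}"
proof -
  obtain y0 where "y0 \<in> X" and max: "\<forall>y\<in>X. a \<bullet> y \<le> a \<bullet> y0"
    using continuous_attains_sup[OF X(2,1) linear_continuous_on[OF bounded_linear_inner_right]]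
    by blast
  then obtain i z where "z \<in> X" "y0 = Smap lam i z"
    using X(3) by blast
  then have "a \<bullet> y0 = lam * (a \<bullet> z) + (1 - lam) * (a \<bullet> ebasis i)"
    by (simp add: Smap_def inner_add_right)
  also have "\<dots> \<le> lam * (a \<bullet> y0) + (1 - lam) * b"
    using max \<open>z \<in> X\<close> vertices lam by (intro add_mono mult_left_mono) auto
  finally have "(1 - lam) * (a \<bullet> y0) \<le> (1 - lam) * b"
    by (simp add: algebra_simps)
  then have "a \<bullet> y0 \<le> b"
    using lam by simp
  with max show ?thesis
    by auto
qed

lemma interior_subset_open_halfspace:
  fixes a :: "'a::euclidean_space"
  assumes "a \<noteq> 0" "X \<subseteq> {y. a \<bullet> y \<le> b}"
  shows "interior X \<subseteq> {y. a \<bullet> y < b}"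
  using interior_mono[OF assms(2)] assms(1) by simp

lemma Tword_Nil [simp]: "Tword lam [] x = x"
  by (simp add: Tword_def)

lemma Tword_Cons [simp]: "Tword lam (i # a) x = Tword lam a (Tmap lam i x)"
  by (simp add: Tword_def)

lemma Tmap_Some_nth:
  "Tmap lam (Some j) y $ k = (y $ k - (if k = j then 1 - lam else 0)) / lam"
  by (simp add: Tmap_def ebasis_def axis_def)

lemma sum_Tmap_Some:
  "(\<Sum>k\<in>UNIV. Tmap lam (Some j) y $ k) = ((\<Sum>k\<in>UNIV. y $ k) - (1 - lam)) / lam"
  by (simp add: Tmap_Some_nth sum_divide_distrib[symmetric] sum_subtractf)

lemma Tmap_greedy_step:
  fixes y :: "real^'n::finite"
  assumes lam: "0 < lam" "lam < 1"
    and pos: "\<forall>k. 0 < y $ k" and big: "1 - lam < y $ j" and sum: "(\<Sum>k\<in>UNIV. y $ k) \<le> s0"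
  shows "\<forall>k. 0 < Tmap lam (Some j) y $ k"
    and "(\<Sum>k\<in>UNIV. Tmap lam (Some j) y $ k) \<le> (\<Sum>k\<in>UNIV. y $ k) - (1 - lam) * (1 - s0) / lam"
proof -
  show "\<forall>k. 0 < Tmap lam (Some j) y $ k"
    using pos big lam by (simp add: Tmap_Some_nth)
  define s where "s = (\<Sum>k\<in>UNIV. y $ k)"
  have "(\<Sum>k\<in>UNIV. Tmap lam (Some j) y $ k) = s - (1 - lam) * (1 - s) / lam"
    using lam by (simp add: sum_Tmap_Some s_def field_simps)
  also have "\<dots> \<le> s - (1 - lam) * (1 - s0) / lam"
    using lam sum by (intro diff_left_mono divide_right_mono mult_left_mono) (auto simp: s_def)
  finally show "(\<Sum>k\<in>UNIV. Tmap lam (Some j) y $ k) \<le> (\<Sum>k\<in>UNIV. y $ k) - (1 - lam) * (1 - s0) / lam"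
    by (simp add: s_def)
qed

lemma exists_Tword_into_corner_cube_within_steps:
  fixes y :: "real^'n::finite"
  assumes lam: "0 < lam" "lam < 1" and "s0 \<le> 1"
    and "\<forall>k. 0 < y $ k" "(\<Sum>k\<in>UNIV. y $ k) \<le> s0"
    and "(\<Sum>k\<in>UNIV. y $ k) \<le> real n * ((1 - lam) * (1 - s0) / lam)"
  shows "\<exists>a. \<forall>j. 0 < Tword lam a y $ j \<and> Tword lam a y $ j \<le> 1 - lam"
  using assms(4-6)
proof (induction n arbitrary: y)
  case 0
  have "0 < (\<Sum>k\<in>UNIV. y $ k)"
    using 0 by (intro sum_pos) auto
  with 0 show ?case
    by simp
next
  case (Suc n)
  define \<delta> where "\<delta> = (1 - lam) * (1 - s0) / lam"
  have "0 \<le> \<delta>"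
    using lam \<open>s0 \<le> 1\<close> by (simp add: \<delta>_def)
  show ?case
  proof (cases "\<forall>j. y $ j \<le> 1 - lam")
    case True
    then show ?thesis
      using Suc.prems(1) by (intro exI[of _ "[]"]) simp
  next
    case False
    then obtain j where "1 - lam < y $ j"
      by (auto simp: not_le)
    note step = Tmap_greedy_step[OF lam Suc.prems(1) this Suc.prems(2)]
    have "(\<Sum>k\<in>UNIV. Tmap lam (Some j) y $ k) \<le> (\<Sum>k\<in>UNIV. y $ k) - \<delta>"
      using step(2) by (simp add: \<delta>_def)
    moreover have "(\<Sum>k\<in>UNIV. y $ k) \<le> real n * \<delta> + \<delta>"
      using Suc.prems(3) unfolding \<delta>_def by (simp only: of_nat_Suc distrib_right mult_1_left)
    ultimately have "(\<Sum>k\<in>UNIV. Tmap lam (Some j) y $ k) \<le> s0"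
      "(\<Sum>k\<in>UNIV. Tmap lam (Some j) y $ k) \<le> real n * \<delta>"
      using Suc.prems(2) \<open>0 \<le> \<delta>\<close> by linarith+
    then obtain a where "\<forall>i. 0 < Tword lam a (Tmap lam (Some j) y) $ i \<and>
        Tword lam a (Tmap lam (Some j) y) $ i \<le> 1 - lam"
      using Suc.IH step(1) unfolding \<delta>_def by blast
    then show ?thesis
      by (intro exI[of _ "Some j # a"]) simp
  qed
qed

lemma exists_Tword_into_corner_cube:
  fixes y :: "real^'n::finite"
  assumes lam: "0 < lam" "lam < 1"
    and pos: "\<forall>k. 0 < y $ k" and sum: "(\<Sum>k\<in>UNIV. y $ k) < 1"
  shows "\<exists>a. \<forall>j. 0 < Tword lam a y $ j \<and> Tword lam a y $ j \<le> 1 - lam"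
proof -
  define s0 where "s0 = (\<Sum>k\<in>UNIV. y $ k)"
  define \<delta> where "\<delta> = (1 - lam) * (1 - s0) / lam"
  have "0 < \<delta>"
    using lam sum by (simp add: \<delta>_def s0_def)
  obtain n :: nat where "s0 / \<delta> \<le> real n"
    using real_arch_simple by blast
  then have "s0 \<le> real n * \<delta>"
    using \<open>0 < \<delta>\<close> by (simp add: pos_divide_le_eq)
  then show ?thesis
    using exists_Tword_into_corner_cube_within_steps[OF lam, of s0 y n] pos sum
    by (simp add: s0_def \<delta>_def)
qed

theorem lemma4p5:
  fixes lam :: real and X :: "(real^'n::finite) set" and x :: "real^'n"
  assumes "real CARD('n) / (real CARD('n) + 1) \<le> lam" and "lam < 1"
    and "X \<noteq> {}" and "compact X" and "X = (\<Union>i. Smap lam i ` X)"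
    and "x \<in> interior X"
  shows "\<exists>a. \<forall>j. 0 < Tword lam a x $ j \<and> Tword lam a x $ j \<le> 1 - lam"
proof -
  have "0 < real CARD('n) / (real CARD('n) + 1)"
    by simp
  with assms(1,2) have lam: "0 < lam" "lam < 1"
    by linarith+
  note attractor = attractor_subset_halfspace[OF lam assms(3-5)]
  have "0 < x $ j" for j
  proof -
    have "X \<subseteq> {y. (- axis j 1) \<bullet> y \<le> 0}"
      by (rule attractor) (simp add: ebasis_def inner_axis_axis split: option.split)
    then have "interior X \<subseteq> {y. (- axis j 1) \<bullet> y < 0}"
      by (rule interior_subset_open_halfspace[rotated]) (simp add: vec_eq_iff axis_def)
    with assms(6) have "(- axis j 1) \<bullet> x < 0"
      by blast
    then show ?thesis
      by (simp add: inner_axis')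
  qed
  moreover have "(\<Sum>k\<in>UNIV. x $ k) < 1"
  proof -
    have "X \<subseteq> {y. (\<chi> k. 1) \<bullet> y \<le> 1}"
      by (rule attractor) (simp add: ebasis_def inner_axis split: option.split)
    then have "interior X \<subseteq> {y. (\<chi> k. 1) \<bullet> y < 1}"
      by (rule interior_subset_open_halfspace[rotated]) (simp add: vec_eq_iff)
    with assms(6) have "(\<chi> k. 1) \<bullet> x < 1"
      by blast
    then show ?thesis
      by (simp add: inner_vec_def)
  qed
  ultimately show ?thesis
    using exists_Tword_into_corner_cube[OF lam] by blast
qed

end
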